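(* Let $\dot{\mathcal C}$ be a colored chain on vertices $Z_1\subset Z_2\subset\dots\subset Z_t$, where $Z_i$ has color $c_i$, and let $\bar c_i$ denote the color other than $c_i$. Fix a blue/red coloring of a Boolean lattice $\mathcal Q$ which contains no copy of $\dot{\mathcal C}$. Then: (i) every $Z\in\Phi_1$ has color $\bar c_1$; (ii) for $2\le i\le t$, if $c_i\ne c_{i-1}$, then every $Z\in\Phi_i$ has color $\bar c_i$; (iii) for $2\le i\le t$, if $c_i=c_{i-1}$, then every vertex of $M_i$ has color $c_i$ and every vertex of $\Phi_i\setminus M_i$ has color $\bar c_i$.
   Context: A Boolean lattice $\mathcal Q=\mathcal Q(\mathcal Z)$ is the poset of all subsets of a finite set $\mathcal Z$ ordered by inclusion; for $X\in\mathcal Q$, $\mathcal Q|_\varnothing^X=\{Y\in\mathcal Q: Y\subseteq X\}$, with the inherited coloring. In a colored poset, a copy of a colored poset $\dot P$ is an induced subposet isomorphic to $P$ with each vertex having the color of the corresponding vertex of $\dot P$. For $0\le i\le t$, $\dot{\mathcal C}[i]$ is the colored subchain $Z_1,\dots,Z_i$ of $\dot{\mathcal C}$ (with $\dot{\mathcal C}[0]$ empty). The phase of $X\in\mathcal Q$ is $\varphi(X)=\max\{i\in\{1,\dots,t+1\}: \mathcal Q|_\varnothing^X \text{ contains a copy of } \dot{\mathcal C}[i-1]\}$. $\Phi_i=\{X\in\mathcal Q:\varphi(X)=i\}$ and $M_i$ is the set of minimal elements (w.r.t. inclusion) of $\Phi_i$. *)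

theory Defs
  imports Main
begin

datatype color = Blue | Red

fun other :: "color \<Rightarrow> color" where
  "other Blue = Red" | "other Red = Blue"

definition has_copy :: "('a set \<Rightarrow> color) \<Rightarrow> 'a set set \<Rightarrow> color list \<Rightarrow> bool" where
  "has_copy col F cs \<longleftrightarrow> (\<exists>Xs. length Xs = length cs \<and> set Xs \<subseteq> F \<and>
       sorted_wrt (\<subset>) Xs \<and> (\<forall>j < length cs. col (Xs ! j) = cs ! j))"

definition phase :: "('a set \<Rightarrow> color) \<Rightarrow> color list \<Rightarrow> 'a set \<Rightarrow> nat" where
  "phase col cs X = Max {i \<in> {1..length cs + 1}. has_copy col (Pow X) (take (i - 1) cs)}"

definition Phi :: "'a set \<Rightarrow> ('a set \<Rightarrow> color) \<Rightarrow> color list \<Rightarrow> nat \<Rightarrow> 'a set set" where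
  "Phi Z col cs i = {X \<in> Pow Z. phase col cs X = i}"

definition Mins :: "'a set set \<Rightarrow> 'a set set" where
  "Mins A = {X \<in> A. \<forall>Y \<in> A. Y \<subseteq> X \<longrightarrow> Y = X}"

end

theory Submission
  imports Defs
begin

text \<open>A vertex X whose color is that of the next chain vertex Z_i and which lies strictly above
a copy of the chain Z_1, ..., Z_(i-1) extends that copy, so its phase exceeds i. Conversely, the
top vertex of a copy of Z_1, ..., Z_(i-1) below X has color c_(i-1) and again phase i. Comparing
the color of X with c_(i-1) and c_i in these two situations gives all three parts.\<close>

lemma eq_other_if_neq: "c \<noteq> d \<Longrightarrow> c = other d"
  by (cases c; cases d) auto

lemma has_copy_mono: "has_copy col F cs \<Longrightarrow> F \<subseteq> G \<Longrightarrow> has_copy col G cs"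
  unfolding has_copy_def by blast

lemma has_copy_Nil: "has_copy col F []"
  unfolding has_copy_def by simp

lemma has_copy_snoc:
  assumes "has_copy col {Y. Y \<subset> X} cs"
  shows "has_copy col (Pow X) (cs @ [col X])"
proof -
  obtain Xs where Xs: "length Xs = length cs" "set Xs \<subseteq> {Y. Y \<subset> X}" "sorted_wrt (\<subset>) Xs"
    "\<forall>j < length cs. col (Xs ! j) = cs ! j"
    using assms unfolding has_copy_def by blast
  have "\<forall>j < length (cs @ [col X]). col ((Xs @ [X]) ! j) = (cs @ [col X]) ! j"
    using Xs(1,4) by (auto simp: nth_append less_Suc_eq)
  moreover have "sorted_wrt (\<subset>) (Xs @ [X])"
    using Xs(2,3) by (auto simp: sorted_wrt_append)
  ultimately show ?thesis
    unfolding has_copy_def using Xs(1,2) by (intro exI[of _ "Xs @ [X]"]) auto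
qed

lemma has_copy_Pow_last:
  assumes "has_copy col (Pow X) cs" "cs \<noteq> []"
  obtains Y where "Y \<subseteq> X" "col Y = last cs" "has_copy col (Pow Y) cs"
proof -
  obtain Xs where Xs: "length Xs = length cs" "set Xs \<subseteq> Pow X" "sorted_wrt (\<subset>) Xs"
    "\<forall>j < length cs. col (Xs ! j) = cs ! j"
    using assms(1) unfolding has_copy_def by blast
  define k where "k = length cs - 1"
  have k: "k < length Xs" using Xs(1) assms(2) unfolding k_def by simp
  have "set Xs \<subseteq> Pow (Xs ! k)"
  proof
    fix A assume "A \<in> set Xs"
    then obtain j where "j < length Xs" and A: "A = Xs ! j" by (metis in_set_conv_nth)
    then have "j \<le> k" using Xs(1) unfolding k_def by simp
    have "Xs ! j \<subseteq> Xs ! k"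
      using sorted_wrt_nth_less[OF Xs(3), of j k] \<open>j \<le> k\<close> k by (cases "j = k") auto
    then show "A \<in> Pow (Xs ! k)" using A by simp
  qed
  moreover have "Xs ! k \<subseteq> X" using Xs(2) nth_mem[OF k] by blast
  moreover have "col (Xs ! k) = last cs"
    using Xs(1,4) k assms(2) by (simp add: k_def last_conv_nth)
  ultimately show ?thesis
    using that Xs(1,3,4) unfolding has_copy_def by blast
qed

lemma phase_ge:
  assumes "1 \<le> i" "i \<le> length cs + 1" "has_copy col (Pow X) (take (i - 1) cs)"
  shows "i \<le> phase col cs X"
  unfolding phase_def using assms by (intro Max_ge) auto

lemma phase_in_range_and_has_copy:
  "1 \<le> phase col cs X \<and> phase col cs X \<le> length cs + 1
   \<and> has_copy col (Pow X) (take (phase col cs X - 1) cs)"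
proof -
  let ?S = "{i \<in> {1..length cs + 1}. has_copy col (Pow X) (take (i - 1) cs)}"
  have "1 \<in> ?S" by (simp add: has_copy_Nil)
  then have "Max ?S \<in> ?S" by (intro Max_in) auto
  then show ?thesis unfolding phase_def by auto
qed

lemma phase_mono: "Y \<subseteq> X \<Longrightarrow> phase col cs Y \<le> phase col cs X"
  using phase_in_range_and_has_copy[of col cs Y]
    has_copy_mono[of col "Pow Y" "take (phase col cs Y - 1) cs" "Pow X"]
    phase_ge[of "phase col cs Y" cs col X]
  by auto

lemma phase_gt_if_extends:
  assumes "has_copy col {Y. Y \<subset> X} (take (i - 1) cs)" "col X = cs ! (i - 1)"
    and "1 \<le> i" "i \<le> length cs"
  shows "i < phase col cs X"
proof -
  have "take (i - 1) cs @ [col X] = take i cs"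
    using assms(2-4) take_Suc_conv_app_nth[of "i - 1" cs] by simp
  then have "has_copy col (Pow X) (take (Suc i - 1) cs)"
    using has_copy_snoc[OF assms(1)] by simp
  then show ?thesis using assms(4) phase_ge[of "Suc i" cs col X] by simp
qed

lemma phase_gt_if_above:
  assumes "Y \<subset> X" "col X = cs ! (i - 1)" "phase col cs Y = i" "i \<le> length cs"
  shows "i < phase col cs X"
proof (rule phase_gt_if_extends)
  show "has_copy col {Y. Y \<subset> X} (take (i - 1) cs)"
    using phase_in_range_and_has_copy[of col cs Y] assms(1,3)
    by (auto intro: has_copy_mono)
qed (use assms phase_in_range_and_has_copy[of col cs Y] in auto)

lemma phase_top_vertex_below:
  assumes "phase col cs X = i" "2 \<le> i"
  obtains Y where "Y \<subseteq> X" "col Y = cs ! (i - 2)" "phase col cs Y = i"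
proof -
  have range: "i \<le> length cs + 1" and copy: "has_copy col (Pow X) (take (i - 1) cs)"
    using phase_in_range_and_has_copy[of col cs X] assms(1) by auto
  have length_take: "length (take (i - 1) cs) = i - 1" using range by simp
  then have nonempty: "take (i - 1) cs \<noteq> []" using assms(2) by auto
  have "last (take (i - 1) cs) = take (i - 1) cs ! (i - 2)"
    using nonempty length_take by (simp add: last_conv_nth numeral_2_eq_2)
  also have "\<dots> = cs ! (i - 2)" using assms(2) by simp
  finally have last_take: "last (take (i - 1) cs) = cs ! (i - 2)" .
  obtain Y where Y: "Y \<subseteq> X" "col Y = cs ! (i - 2)" "has_copy col (Pow Y) (take (i - 1) cs)"
    by (rule has_copy_Pow_last[OF copy nonempty, unfolded last_take])
  have "i \<le> phase col cs Y" using Y(3) assms(2) range by (intro phase_ge) auto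
  moreover have "phase col cs Y \<le> i" using phase_mono[OF Y(1), of col cs] assms(1) by simp
  ultimately show ?thesis using that Y(1,2) by simp
qed

lemma color_of_phase_1:
  assumes "cs \<noteq> []" "phase col cs X = 1"
  shows "col X = other (cs ! 0)"
proof (rule eq_other_if_neq, rule notI)
  assume "col X = cs ! 0"
  then have "1 < phase col cs X"
    using assms(1) by (intro phase_gt_if_extends) (auto simp: has_copy_Nil Suc_le_eq)
  then show False using assms(2) by simp
qed

lemma color_of_phase_if_color_change:
  assumes "2 \<le> i" "i \<le> length cs" "cs ! (i - 1) \<noteq> cs ! (i - 2)" "phase col cs X = i"
  shows "col X = other (cs ! (i - 1))"
proof (rule eq_other_if_neq, rule notI)
  assume c: "col X = cs ! (i - 1)"
  obtain Y where Y: "Y \<subseteq> X" "col Y = cs ! (i - 2)" "phase col cs Y = i"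
    by (rule phase_top_vertex_below[OF assms(4,1)])
  have "Y \<noteq> X" using Y(2) c assms(3) by auto
  with Y(1) have "Y \<subset> X" by simp
  then have "i < phase col cs X" by (rule phase_gt_if_above[OF _ c Y(3) assms(2)])
  then show False using assms(4) by simp
qed

lemma color_of_Mins_Phi_if_same_color:
  assumes "2 \<le> i" "cs ! (i - 1) = cs ! (i - 2)" "X \<in> Mins (Phi Z col cs i)"
  shows "col X = cs ! (i - 1)"
proof -
  have X: "X \<subseteq> Z" "phase col cs X = i" using assms(3) unfolding Mins_def Phi_def by auto
  obtain Y where Y: "Y \<subseteq> X" "col Y = cs ! (i - 2)" "phase col cs Y = i"
    by (rule phase_top_vertex_below[OF X(2) assms(1)])
  have "Y \<in> Phi Z col cs i" using X(1) Y(1,3) unfolding Phi_def by auto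
  moreover have "\<forall>W \<in> Phi Z col cs i. W \<subseteq> X \<longrightarrow> W = X"
    using assms(3) unfolding Mins_def by simp
  ultimately have "Y = X" using Y(1) by simp
  then show ?thesis using Y(2) assms(2) by simp
qed

lemma color_of_Phi_minus_Mins:
  assumes "i \<le> length cs" "X \<in> Phi Z col cs i - Mins (Phi Z col cs i)"
  shows "col X = other (cs ! (i - 1))"
proof (rule eq_other_if_neq, rule notI)
  assume c: "col X = cs ! (i - 1)"
  obtain Y where "Y \<in> Phi Z col cs i" "Y \<subseteq> X" "Y \<noteq> X"
    using assms(2) unfolding Mins_def by auto
  then have "Y \<subset> X" "phase col cs Y = i" unfolding Phi_def by auto
  then have "i < phase col cs X" using c assms(1) by (intro phase_gt_if_above)
  then show False using assms(2) unfolding Phi_def by simp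
qed

theorem proposition14:
  fixes Z :: "'a set" and cs :: "color list" and col :: "'a set \<Rightarrow> color"
  assumes "finite Z" and "cs \<noteq> []"
    and "\<not> has_copy col (Pow Z) cs"
  shows "(\<forall>X \<in> Phi Z col cs 1. col X = other (cs ! 0))
    \<and> (\<forall>i. 2 \<le> i \<and> i \<le> length cs \<and> cs ! (i - 1) \<noteq> cs ! (i - 2) \<longrightarrow>
           (\<forall>X \<in> Phi Z col cs i. col X = other (cs ! (i - 1))))
    \<and> (\<forall>i. 2 \<le> i \<and> i \<le> length cs \<and> cs ! (i - 1) = cs ! (i - 2) \<longrightarrow>
           (\<forall>X \<in> Mins (Phi Z col cs i). col X = cs ! (i - 1))
         \<and> (\<forall>X \<in> Phi Z col cs i - Mins (Phi Z col cs i). col X = other (cs ! (i - 1))))"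
proof (intro conjI allI impI ballI)
  fix X assume "X \<in> Phi Z col cs 1"
  then show "col X = other (cs ! 0)"
    using color_of_phase_1[OF assms(2)] unfolding Phi_def by blast
next
  fix i X assume "2 \<le> i \<and> i \<le> length cs \<and> cs ! (i - 1) \<noteq> cs ! (i - 2)"
    and "X \<in> Phi Z col cs i"
  then show "col X = other (cs ! (i - 1))"
    using color_of_phase_if_color_change unfolding Phi_def by blast
next
  fix i X assume "2 \<le> i \<and> i \<le> length cs \<and> cs ! (i - 1) = cs ! (i - 2)"
    and "X \<in> Mins (Phi Z col cs i)"
  then show "col X = cs ! (i - 1)" using color_of_Mins_Phi_if_same_color by blast
next
  fix i X assume "2 \<le> i \<and> i \<le> length cs \<and> cs ! (i - 1) = cs ! (i - 2)"
    and "X \<in> Phi Z col cs i - Mins (Phi Z col cs i)"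
  then show "col X = other (cs ! (i - 1))" using color_of_Phi_minus_Mins by blast
qed

end
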